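(* Let $s\in(0,1)$. The function $\tau^n_s:[0,2\pi]\to[0,\infty]$ is increasing on $[0,2\pi]$.
   Context: For $n\ge1$ and $s\in(0,1)$, $\tau^n_s(2\pi)=+\infty$, $\tau^n_s(0)=s^{\frac{2n+3}{2n+1}}$, and for $\theta\in(0,2\pi)$, $$\tau^n_s(\theta)=s^{\frac1{2n+1}}\left(\frac{\sin\frac{\theta s}{2}}{\sin\frac{\theta}{2}}\right)^{\frac{2n-1}{2n+1}}\left(\frac{\sin\frac{\theta s}{2}-\frac{\theta s}{2}\cos\frac{\theta s}{2}}{\sin\frac{\theta}{2}-\frac{\theta}{2}\cos\frac{\theta}{2}}\right)^{\frac1{2n+1}}.$$ *)

theory Defs
  imports "HOL-Analysis.Analysis"
begin

text \<open>The function tau^n_s on [0, 2 pi], with values in [0, +infinity] (extended reals).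
  Outside [0, 2 pi] the value is irrelevant (set to 0).\<close>
definition tau :: "nat \<Rightarrow> real \<Rightarrow> real \<Rightarrow> ereal" where
  "tau n s \<theta> =
    (if \<theta> = 2 * pi then \<infinity>
     else if \<theta> = 0 then ereal (s powr ((2 * real n + 3) / (2 * real n + 1)))
     else if 0 < \<theta> \<and> \<theta> < 2 * pi then
       ereal (s powr (1 / (2 * real n + 1))
         * (sin (\<theta> * s / 2) / sin (\<theta> / 2)) powr ((2 * real n - 1) / (2 * real n + 1))
         * ((sin (\<theta> * s / 2) - (\<theta> * s / 2) * cos (\<theta> * s / 2))
             / (sin (\<theta> / 2) - (\<theta> / 2) * cos (\<theta> / 2))) powr (1 / (2 * real n + 1)))
     else 0)"

end

theory Submission
  imports Defs
begin

text \<open>Write \<open>x = \<theta>/2\<close> and \<open>h x = sin x - x cos x\<close>. On \<open>0 < \<theta> < 2\<pi>\<close> the function \<open>\<tau>\<close> is a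
  product of nonnegative powers of \<open>sin (s x) / sin x\<close> and \<open>h (s x) / h x\<close>, so it suffices that
  both ratios increase on \<open>0 < x < \<pi>\<close>. For the sine ratio the numerator of the derivative,
  \<open>s cos (s x) sin x - sin (s x) cos x\<close>, vanishes at 0 and has derivative
  \<open>(1 - s\<^sup>2) sin (s x) sin x \<ge> 0\<close>. For the second ratio, \<open>h' x = x sin x\<close>, and Cauchy's mean
  value theorem reduces the sign of the derivative to the monotonicity of the sine ratio. Near
  \<open>\<theta> = 0\<close> the ratios are bounded below by their limits \<open>s\<close> and \<open>s\<^sup>3\<close>, which give \<open>\<tau>(0)\<close>.\<close>

definition sin_minus_x_cos :: "real \<Rightarrow> real" where
  "sin_minus_x_cos x = sin x - x * cos x"

lemma sin_minus_x_cos_0 [simp]: "sin_minus_x_cos 0 = 0"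
  by (simp add: sin_minus_x_cos_def)

lemma has_real_derivative_sin_minus_x_cos [derivative_intros]:
  "(f has_real_derivative f') (at x within S) \<Longrightarrow>
   ((\<lambda>x. sin_minus_x_cos (f x)) has_real_derivative (f x * sin (f x) * f')) (at x within S)"
  unfolding sin_minus_x_cos_def by (auto intro!: derivative_eq_intros simp: algebra_simps)

lemma continuous_sin_minus_x_cos [continuous_intros]:
  fixes f :: "'a::t2_space \<Rightarrow> real"
  shows "continuous F f \<Longrightarrow> continuous F (\<lambda>x. sin_minus_x_cos (f x))"
  unfolding sin_minus_x_cos_def by (intro continuous_intros)

lemma continuous_on_sin_minus_x_cos [continuous_intros]:
  fixes f :: "'a::t2_space \<Rightarrow> real"
  shows "continuous_on S f \<Longrightarrow> continuous_on S (\<lambda>x. sin_minus_x_cos (f x))"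
  unfolding sin_minus_x_cos_def by (intro continuous_intros)

lemma sin_minus_x_cos_pos:
  assumes "0 < x" "x < pi"
  shows "0 < sin_minus_x_cos x"
proof -
  have "sin_minus_x_cos 0 < sin_minus_x_cos x"
  proof (rule DERIV_pos_imp_increasing_open[OF assms(1)])
    fix y assume "0 < y" "y < x"
    then show "\<exists>d. DERIV sin_minus_x_cos y :> d \<and> 0 < d"
      using sin_gt_zero[of y] assms
      by (intro exI[of _ "y * sin y"]) (auto intro!: derivative_eq_intros)
  qed (intro continuous_intros)
  then show ?thesis by simp
qed

lemma mult_in_open_0_pi:
  assumes "0 < s" "s < 1" "0 < x" "x < pi"
  shows "0 < s * x" "s * x < pi"
proof -
  show "0 < s * x" using assms by simp
  have "s * x < x" using assms by (simp add: mult_less_cancel_right2)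
  with assms show "s * x < pi" by linarith
qed

lemma mult_sin_le_sin_mult:
  assumes "0 \<le> s" "s \<le> 1" "0 \<le> x" "x \<le> pi"
  shows "s * sin x \<le> sin (s * x)"
proof -
  have "sin (s * 0) - s * sin 0 \<le> sin (s * x) - s * sin x"
  proof (rule DERIV_nonneg_imp_increasing_open[OF assms(3)])
    fix y assume y: "0 < y" "y < x"
    have "cos y \<le> cos (s * y)"
      using assms y by (intro cos_monotone_0_pi_le) (auto simp: mult_le_cancel_right1)
    then have "0 \<le> s * (cos (s * y) - cos y)"
      using assms by simp
    then show "\<exists>d. DERIV (\<lambda>x. sin (s * x) - s * sin x) y :> d \<and> 0 \<le> d"
      by (intro exI[of _ "s * (cos (s * y) - cos y)"])
        (auto intro!: derivative_eq_intros simp: algebra_simps)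
  qed (intro continuous_intros)
  then show ?thesis by simp
qed

lemma mult_sin_minus_x_cos_le:
  assumes "0 \<le> s" "s \<le> 1" "0 \<le> x" "x \<le> pi"
  shows "s ^ 3 * sin_minus_x_cos x \<le> sin_minus_x_cos (s * x)"
proof -
  have "sin_minus_x_cos (s * 0) - s ^ 3 * sin_minus_x_cos 0
      \<le> sin_minus_x_cos (s * x) - s ^ 3 * sin_minus_x_cos x"
  proof (rule DERIV_nonneg_imp_increasing_open[OF assms(3)])
    fix y assume y: "0 < y" "y < x"
    have "s * sin y \<le> sin (s * y)"
      using assms y by (intro mult_sin_le_sin_mult) auto
    then have "0 \<le> s\<^sup>2 * y * (sin (s * y) - s * sin y)"
      using assms y by simp
    then show "\<exists>d. DERIV (\<lambda>x. sin_minus_x_cos (s * x) - s ^ 3 * sin_minus_x_cos x) y :> d \<and> 0 \<le> d"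
      by (intro exI[of _ "s\<^sup>2 * y * (sin (s * y) - s * sin y)"])
        (auto intro!: derivative_eq_intros simp: algebra_simps power2_eq_square power3_eq_cube)
  qed (intro continuous_intros)
  then show ?thesis by simp
qed

lemma sin_mult_cos_le:
  assumes "0 < s" "s < 1" "0 \<le> x" "x < pi"
  shows "sin (s * x) * cos x \<le> s * cos (s * x) * sin x"
proof -
  let ?P = "\<lambda>x. s * cos (s * x) * sin x - sin (s * x) * cos x"
  have "?P 0 \<le> ?P x"
  proof (rule DERIV_nonneg_imp_increasing_open[OF assms(3)])
    fix y assume y: "0 < y" "y < x"
    have "0 < sin (s * y)" "0 < sin y"
      using mult_in_open_0_pi[of s y] assms y by (auto intro!: sin_gt_zero)
    moreover have "s\<^sup>2 < 1"
      using assms by (simp add: power_less_one_iff)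
    ultimately have "0 \<le> (1 - s\<^sup>2) * sin (s * y) * sin y"
      by simp
    then show "\<exists>d. DERIV ?P y :> d \<and> 0 \<le> d"
      by (intro exI[of _ "(1 - s\<^sup>2) * sin (s * y) * sin y"])
        (auto intro!: derivative_eq_intros simp: algebra_simps power2_eq_square)
  qed (intro continuous_intros)
  then show ?thesis by simp
qed

lemma mono_on_sin_mult_div_sin:
  assumes "0 < s" "s < 1"
  shows "mono_on {0<..<pi} (\<lambda>x. sin (s * x) / sin x)"
proof (rule mono_onI)
  fix a b :: real assume ab: "a \<in> {0<..<pi}" "b \<in> {0<..<pi}" "a \<le> b"
  have sin_nz: "sin y \<noteq> 0" if "a \<le> y" "y \<le> b" for y
    using ab that sin_gt_zero[of y] by auto
  show "sin (s * a) / sin a \<le> sin (s * b) / sin b"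
  proof (rule DERIV_nonneg_imp_increasing_open[OF ab(3)])
    fix y assume y: "a < y" "y < b"
    have "0 \<le> (s * cos (s * y) * sin y - sin (s * y) * cos y) / (sin y)\<^sup>2"
      using sin_mult_cos_le[of s y] assms ab y by auto
    then show "\<exists>d. DERIV (\<lambda>x. sin (s * x) / sin x) y :> d \<and> 0 \<le> d"
      using sin_nz[of y] y
      by (intro exI[of _ "(s * cos (s * y) * sin y - sin (s * y) * cos y) / (sin y)\<^sup>2"])
        (auto intro!: derivative_eq_intros simp: algebra_simps power2_eq_square)
  qed (auto intro!: continuous_intros simp: sin_nz)
qed

lemma sin_minus_x_cos_mult_le:
  assumes "0 < s" "s < 1" "0 < y" "y < pi"
  shows "sin_minus_x_cos (s * y) * sin y \<le> s\<^sup>2 * sin_minus_x_cos y * sin (s * y)"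
proof -
  have "\<exists>c. 0 < c \<and> c < y \<and>
      (sin_minus_x_cos (s * y) - sin_minus_x_cos (s * 0)) * (c * sin c)
      = (sin_minus_x_cos y - sin_minus_x_cos 0) * (s * c * sin (s * c) * s)"
    by (rule GMVT'[OF assms(3)]) (auto intro!: derivative_eq_intros continuous_intros)
  then obtain c where c: "0 < c" "c < y"
    and mvt: "sin_minus_x_cos (s * y) * sin c = s\<^sup>2 * sin_minus_x_cos y * sin (s * c)"
    by (auto simp: power2_eq_square)
  have pos: "0 < sin c" "0 < sin y" "0 < sin_minus_x_cos y"
    using c assms by (auto intro!: sin_gt_zero sin_minus_x_cos_pos)
  have ratio: "sin (s * c) / sin c \<le> sin (s * y) / sin y"
    using mono_on_sin_mult_div_sin[OF assms(1,2)] c assms by (auto elim!: mono_onD)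
  have "sin_minus_x_cos (s * y) = s\<^sup>2 * sin_minus_x_cos y * (sin (s * c) / sin c)"
    using mvt pos by (simp add: eq_divide_eq)
  also have "\<dots> \<le> s\<^sup>2 * sin_minus_x_cos y * (sin (s * y) / sin y)"
    using ratio pos by (intro mult_left_mono) auto
  finally have "sin_minus_x_cos (s * y) \<le> s\<^sup>2 * sin_minus_x_cos y * (sin (s * y) / sin y)" .
  with pos show ?thesis
    by (simp add: pos_le_divide_eq)
qed

lemma mono_on_sin_minus_x_cos_ratio:
  assumes "0 < s" "s < 1"
  shows "mono_on {0<..<pi} (\<lambda>x. sin_minus_x_cos (s * x) / sin_minus_x_cos x)"
proof (rule mono_onI)
  fix a b :: real assume ab: "a \<in> {0<..<pi}" "b \<in> {0<..<pi}" "a \<le> b"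
  have h_nz: "sin_minus_x_cos y \<noteq> 0" if "a \<le> y" "y \<le> b" for y
    using ab that sin_minus_x_cos_pos[of y] by auto
  show "sin_minus_x_cos (s * a) / sin_minus_x_cos a \<le> sin_minus_x_cos (s * b) / sin_minus_x_cos b"
  proof (rule DERIV_nonneg_imp_increasing_open[OF ab(3)])
    fix y assume y: "a < y" "y < b"
    let ?d = "y * (s\<^sup>2 * sin_minus_x_cos y * sin (s * y) - sin_minus_x_cos (s * y) * sin y)
      / (sin_minus_x_cos y)\<^sup>2"
    have "0 \<le> ?d"
      using sin_minus_x_cos_mult_le[of s y] assms ab y by auto
    then show "\<exists>d. DERIV (\<lambda>x. sin_minus_x_cos (s * x) / sin_minus_x_cos x) y :> d \<and> 0 \<le> d"
      using h_nz[of y] y by (intro exI[of _ ?d])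
        (auto intro!: derivative_eq_intros simp: algebra_simps power2_eq_square)
  qed (auto intro!: continuous_intros simp: h_nz)
qed

lemma tau_eq_interior:
  assumes "0 < \<theta>" "\<theta> < 2 * pi"
  shows "tau n s \<theta> = ereal (s powr (1 / (2 * real n + 1))
     * (sin (s * (\<theta> / 2)) / sin (\<theta> / 2)) powr ((2 * real n - 1) / (2 * real n + 1))
     * (sin_minus_x_cos (s * (\<theta> / 2)) / sin_minus_x_cos (\<theta> / 2)) powr (1 / (2 * real n + 1)))"
proof -
  have "\<theta> * s / 2 = s * (\<theta> / 2)" "\<theta> \<noteq> 0" "\<theta> \<noteq> 2 * pi"
    using assms by auto
  then show ?thesis
    using assms by (simp only: tau_def sin_minus_x_cos_def if_False) simp
qed

lemma tau_eq_0:
  assumes "0 < s"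
  shows "tau n s 0 = ereal (s powr (1 / (2 * real n + 1))
     * s powr ((2 * real n - 1) / (2 * real n + 1)) * (s ^ 3) powr (1 / (2 * real n + 1)))"
proof -
  define p where "p = 1 / (2 * real n + 1)"
  define q where "q = (2 * real n - 1) / (2 * real n + 1)"
  have "(2 * real n + 3) / (2 * real n + 1) = p + q + 3 * p"
    by (simp add: p_def q_def add_divide_distrib [symmetric])
  then have "tau n s 0 = ereal (s powr (p + q + 3 * p))"
    by (simp add: tau_def)
  also have "\<dots> = ereal (s powr p * s powr q * s powr (3 * p))"
    by (simp only: powr_add)
  also have "s powr (3 * p) = (s ^ 3) powr p"
    using assms powr_powr[of s 3 p] by simp
  finally show ?thesis
    by (simp only: p_def q_def)
qed

theorem lemma2p1:
  fixes n :: nat and s :: real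
  assumes "n \<ge> 1" and "0 < s" and "s < 1"
  shows "mono_on {0..2 * pi} (tau n s)"
proof (rule mono_onI)
  define p where "p = 1 / (2 * real n + 1)"
  define q where "q = (2 * real n - 1) / (2 * real n + 1)"
  have powr_mono: "ereal (s powr p * x powr q * y powr p) \<le> ereal (s powr p * x' powr q * y' powr p)"
    if "0 \<le> x" "x \<le> x'" "0 \<le> y" "y \<le> y'" for x x' y y'
    using that assms(1) by (auto simp: p_def q_def intro!: mult_mono powr_mono2)
  fix a b assume ab: "a \<in> {0..2 * pi}" "b \<in> {0..2 * pi}" "a \<le> b"
  consider "b = 2 * pi" | "a = b" | "a = 0" "0 < b" "b < 2 * pi" | "0 < a" "a < b" "b < 2 * pi"
    using ab by fastforce
  then show "tau n s a \<le> tau n s b"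
  proof cases
    case 3
    have "s \<le> sin (s * (b / 2)) / sin (b / 2)"
      using mult_sin_le_sin_mult[of s "b / 2"] sin_gt_zero[of "b / 2"] 3 assms
      by (simp add: pos_le_divide_eq)
    moreover have "s ^ 3 \<le> sin_minus_x_cos (s * (b / 2)) / sin_minus_x_cos (b / 2)"
      using mult_sin_minus_x_cos_le[of s "b / 2"] sin_minus_x_cos_pos[of "b / 2"] 3 assms
      by (simp add: pos_le_divide_eq)
    ultimately show ?thesis
      unfolding 3 tau_eq_0[OF assms(2)] tau_eq_interior[OF 3(2,3)] p_def [symmetric] q_def [symmetric]
      using assms by (intro powr_mono) auto
  next
    case 4
    have "sin (s * (a / 2)) / sin (a / 2) \<le> sin (s * (b / 2)) / sin (b / 2)"
      "sin_minus_x_cos (s * (a / 2)) / sin_minus_x_cos (a / 2)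
        \<le> sin_minus_x_cos (s * (b / 2)) / sin_minus_x_cos (b / 2)"
      using 4 mono_onD[OF mono_on_sin_mult_div_sin[OF assms(2,3)], of "a / 2" "b / 2"]
        mono_onD[OF mono_on_sin_minus_x_cos_ratio[OF assms(2,3)], of "a / 2" "b / 2"]
      by auto
    moreover have "0 < sin (s * (a / 2))" "0 < sin (a / 2)"
      "0 < sin_minus_x_cos (s * (a / 2))" "0 < sin_minus_x_cos (a / 2)"
      using 4 mult_in_open_0_pi[of s "a / 2"] assms
      by (auto intro!: sin_gt_zero sin_minus_x_cos_pos)
    ultimately show ?thesis
      unfolding tau_eq_interior[OF 4(1) order.strict_trans[OF 4(2,3)]]
        tau_eq_interior[OF order.strict_trans[OF 4(1,2)] 4(3)]
        p_def [symmetric] q_def [symmetric]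
      using 4 by (intro powr_mono) auto
  qed (auto simp: tau_def)
qed

end
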